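(* Consider an $n$-player game with strategy sets $\mathcal{X}_i$ (nonempty convex compact), differentiable utilities $u_i:\mathcal{X}\to\mathbb{R}$ on $\mathcal{X}=\prod_i\mathcal{X}_i$, and operator $F=(F_1,\dots,F_n)$ with $F_i(x)=-\nabla_{x_i}u_i(x)$. Assume, writing $\mathcal{X}=\prod_{r=1}^d\mathcal{Z}_r$, that $F$ is $L$-Lipschitz and the average $(\alpha,\ell,h)$-generalized Minty property holds. Then for any $\epsilon>0$, after $T=O(1/\epsilon^2)$ iterations of rescaled optimistic gradient descent (with the learning rate $\eta\le\frac14\sqrt{\ell/(h^3L^2+hB_F^2\alpha^2d)}$, the constant in $O(\cdot)$ depending only on the problem parameters), one obtains a point $x\in\mathcal{X}$ such that: (1) if for each player $i$ the function $u_i(\cdot,x_{-i})$ is $L$-smooth, then for every $i$ and every $x_i^\star\in\mathcal{X}_i$ with $\|x_i^\star-x_i\|_2\le\delta$, $u_i(x)-u_i(x_i^\star,x_{-i})\ge-\epsilon-\frac L2\delta^2$; (2) if each $u_i$ is gradient dominant, then for every $i$ and every $x_i^\star\in\mathcal{X}_i$, $u_i(x)-u_i(x_i^\star,x_{-i})\ge-\epsilon$.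
   Context: $B_F:=\max_r\sup_x\|F_r(x)\|_2$ where $F_r$ is the component of $F$ on $\mathcal{Z}_r$. $\mathbf{1}_{\mathcal{Z}_r}$ is the indicator vector of the coordinates of $\mathcal{Z}_r$; $\circ$ is the coordinatewise product; vector inequalities are coordinatewise. $A(x)=\sum_r a_r(x)\mathbf{1}_{\mathcal{Z}_r}$ with each $a_r$ $\alpha$-Lipschitz and $0<\ell\le A(x)\le h$; $W(x)=\sum_r w_r(x)\mathbf{1}_{\mathcal{Z}_r}$ with $0<\ell\le W(x)\le h$. Average $(\alpha,\ell,h)$-generalized Minty property: for every $T$ and sequence $(x^{(t)})_{t\le T}$ in $\mathcal{X}$ there is $x^\star\in\mathcal{X}$ with $\sum_{t=1}^T\langle x^{(t)}-x^\star,F(x^{(t)})\circ A(x^{(t)})\circ W(x^\star)\rangle\ge0$. Rescaled optimistic gradient descent: from arbitrary $x^{(0)}=\hat x^{(1)}$, $x^{(t)}=\Pi_{\mathcal{X}}(\hat x^{(t)}-\eta A(x^{(t-1)})\circ F(x^{(t-1)}))$, $\hat x^{(t+1)}=\Pi_{\mathcal{X}}(\hat x^{(t)}-\eta A(x^{(t)})\circ F(x^{(t)}))$. Gradient dominance (per player, with parameter $G>0$): $u_i(x)-\max_{x_i^\star\in\mathcal{X}_i}u_i(x_i^\star,x_{-i})\ge G\min_{x_i^\star\in\mathcal{X}_i}\langle x_i-x_i^\star,\nabla_{x_i}u_i(x)\rangle$ for all $x\in\mathcal{X}$. *)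

theory Defs
  imports "HOL-Analysis.Analysis"
begin

text \<open>A partition of the coordinates is given by
  a labelling g :: 'k => 'c (players, or the blocks Z_r).\<close>

text \<open>Restriction of a vector to the coordinates of class c (other coordinates set to 0);
  this is the component of the vector on that block.\<close>
definition restr :: "('k \<Rightarrow> 'c) \<Rightarrow> 'c \<Rightarrow> real^'k \<Rightarrow> real^'k" where
  "restr g c x = (\<chi> k. if g k = c then x $ k else 0)"

definition supported_on :: "('k \<Rightarrow> 'c) \<Rightarrow> 'c \<Rightarrow> (real^'k) set" where
  "supported_on g c = {v. \<forall>k. g k \<noteq> c \<longrightarrow> v $ k = 0}"

definition prod_set :: "('k \<Rightarrow> 'c) \<Rightarrow> ('c \<Rightarrow> (real^'k) set) \<Rightarrow> (real^'k) set" where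
  "prod_set g S = {x. \<forall>c. restr g c x \<in> S c}"

definition upd :: "('k \<Rightarrow> 'c) \<Rightarrow> 'c \<Rightarrow> real^'k \<Rightarrow> real^'k \<Rightarrow> real^'k" where
  "upd g c x y = (\<chi> k. if g k = c then y $ k else x $ k)"

text \<open>Full gradient of a real function on real^'k (meaningful where it is differentiable).\<close>
definition grad :: "(real^'k \<Rightarrow> real) \<Rightarrow> real^'k \<Rightarrow> real^'k" where
  "grad f x = (\<chi> k. frechet_derivative f (at x) (axis k 1))"

definition game_op :: "('k \<Rightarrow> 'p) \<Rightarrow> ('p \<Rightarrow> real^'k \<Rightarrow> real) \<Rightarrow> real^'k \<Rightarrow> real^'k" where
  "game_op pl u x = (\<chi> k. - (grad (u (pl k)) x $ k))"

definition blockvec :: "('k \<Rightarrow> 'r) \<Rightarrow> ('r \<Rightarrow> real^'k \<Rightarrow> real) \<Rightarrow> real^'k \<Rightarrow> real^'k" where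
  "blockvec blk a x = (\<chi> k. a (blk k) x)"

definition cmul :: "real^'k \<Rightarrow> real^'k \<Rightarrow> real^'k" where
  "cmul v w = (\<chi> k. v $ k * w $ k)"

definition proj :: "(real^'k) set \<Rightarrow> real^'k \<Rightarrow> real^'k" where
  "proj X y = closest_point X y"

definition BF :: "('k \<Rightarrow> 'r) \<Rightarrow> (real^'k) set \<Rightarrow> (real^'k \<Rightarrow> real^'k) \<Rightarrow> real" where
  "BF blk X F = Sup {norm (restr blk r (F x)) | r x. x \<in> X}"

text \<open>Average (alpha,l,h)-generalized Minty property (the Lipschitz/bounds requirements
  on A and W are stated separately).\<close>
definition avg_minty :: "(real^'k) set \<Rightarrow> (real^'k \<Rightarrow> real^'k) \<Rightarrow> (real^'k \<Rightarrow> real^'k)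
    \<Rightarrow> (real^'k \<Rightarrow> real^'k) \<Rightarrow> bool" where
  "avg_minty X F A W \<longleftrightarrow>
     (\<forall>(T::nat) (xs::nat \<Rightarrow> real^'k). (\<forall>t\<in>{1..T}. xs t \<in> X) \<longrightarrow>
        (\<exists>xstar\<in>X. (\<Sum>t=1..T. (xs t - xstar) \<bullet> cmul (cmul (F (xs t)) (A (xs t))) (W xstar)) \<ge> 0))"

text \<open>Rescaled optimistic gradient descent. rogd X F A eta x0 t = (x^(t), xhat^(t+1)),
  started from x^(0) = xhat^(1) = x0.\<close>
primrec rogd :: "(real^'k) set \<Rightarrow> (real^'k \<Rightarrow> real^'k) \<Rightarrow> (real^'k \<Rightarrow> real^'k) \<Rightarrow> real
    \<Rightarrow> real^'k \<Rightarrow> nat \<Rightarrow> (real^'k) \<times> (real^'k)" where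
  "rogd X F A eta x0 0 = (x0, x0)"
| "rogd X F A eta x0 (Suc t) =
     (let xp = fst (rogd X F A eta x0 t); xh = snd (rogd X F A eta x0 t);
          xn = proj X (xh - eta *\<^sub>R cmul (A xp) (F xp))
      in (xn, proj X (xh - eta *\<^sub>R cmul (A xn) (F xn))))"

definition rogd_x :: "(real^'k) set \<Rightarrow> (real^'k \<Rightarrow> real^'k) \<Rightarrow> (real^'k \<Rightarrow> real^'k) \<Rightarrow> real
    \<Rightarrow> real^'k \<Rightarrow> nat \<Rightarrow> real^'k" where
  "rogd_x X F A eta x0 t = fst (rogd X F A eta x0 t)"

definition player_smooth :: "('k \<Rightarrow> 'p) \<Rightarrow> ('p \<Rightarrow> (real^'k) set) \<Rightarrow> (real^'k) set
    \<Rightarrow> ('p \<Rightarrow> real^'k \<Rightarrow> real) \<Rightarrow> real \<Rightarrow> bool" where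
  "player_smooth pl Xs X u L \<longleftrightarrow>
     (\<forall>i. \<forall>x\<in>X. \<forall>y\<in>Xs i. \<forall>z\<in>Xs i.
        norm (restr pl i (grad (u i) (upd pl i x y)) - restr pl i (grad (u i) (upd pl i x z)))
          \<le> L * norm (y - z))"

definition grad_dominant :: "('k \<Rightarrow> 'p) \<Rightarrow> ('p \<Rightarrow> (real^'k) set) \<Rightarrow> (real^'k) set
    \<Rightarrow> ('p \<Rightarrow> real^'k \<Rightarrow> real) \<Rightarrow> real \<Rightarrow> bool" where
  "grad_dominant pl Xs X u G \<longleftrightarrow>
     (\<forall>i. \<forall>x\<in>X.
        u i x - (SUP y\<in>Xs i. u i (upd pl i x y))
          \<ge> G * (INF y\<in>Xs i. (restr pl i x - y) \<bullet> restr pl i (grad (u i) x)))"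

end

(* The iteration is analysed in the weighted norm given by om = W(xstar), where xstar is
   the point supplied by the Minty property for the first T iterates. Since W is constant on
   blocks and X is a product of blocks, the projection onto X still satisfies its
   variational inequality in this weighted norm, and the classical potential argument of
   optimistic gradient descent applies: the Minty inequality makes the cross terms
   nonnegative on average, the step size controls the Lipschitz error of the rescaled
   operator A F, and so after T steps some iterate has residuals of order 1/sqrt T, hence a
   gap of order 1/sqrt T for the rescaled operator. Testing against deviations in a single
   block removes the rescaling, because A is constant and at least l on each block. Finally
   a gap for the game operator controls each player's linearized deviation gain, which
   bounds the true gain by the descent lemma under smoothness, and directly under gradient
   dominance. *)

theory Submission
  imports Defs
begin

section \<open>Blocks of coordinates and product sets\<close>

lemma restr_nth [simp]: "restr g c x $ k = (if g k = c then x $ k else 0)"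
  by (simp add: restr_def)

lemma upd_nth [simp]: "upd g c x y $ k = (if g k = c then y $ k else x $ k)"
  by (simp add: upd_def)

lemma cmul_nth [simp]: "cmul v w $ k = v $ k * w $ k"
  by (simp add: cmul_def)

lemma blockvec_nth [simp]: "blockvec g a x $ k = a (g k) x"
  by (simp add: blockvec_def)

lemma linear_restr: "linear (restr g c)"
  by (rule linearI) (auto simp: vec_eq_iff)

lemma restr_supported: "v \<in> supported_on g c \<Longrightarrow> restr g c v = v"
  by (auto simp: supported_on_def vec_eq_iff)

lemma upd_restr_self: "upd g c x (restr g c x) = x"
  by (simp add: vec_eq_iff)

lemma restr_upd: "restr g c' (upd g c x y) = (if c' = c then restr g c y else restr g c' x)"
  by (auto simp: vec_eq_iff)

lemma upd_minus_self: "y \<in> supported_on g c \<Longrightarrow> upd g c x y - x = y - restr g c x"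
  by (auto simp: vec_eq_iff supported_on_def)

lemma inner_cart: "u \<bullet> (v::real^'k::finite) = (\<Sum>k\<in>UNIV. u $ k * v $ k)"
  by (simp add: inner_vec_def)

lemma norm_sq_cart: "(norm (v::real^'k::finite))\<^sup>2 = (\<Sum>k\<in>UNIV. (v $ k)\<^sup>2)"
  unfolding power2_norm_eq_inner inner_cart by (simp add: power2_eq_square)

lemma sum_restr_inner_weighted:
  fixes g :: "'k::finite \<Rightarrow> 'r::finite"
  shows "(\<Sum>r\<in>UNIV. f r * (restr g r u \<bullet> v)) = (\<Sum>k\<in>UNIV. f (g k) * (u $ k * v $ k))"
proof -
  have "(\<Sum>r\<in>UNIV. f r * (restr g r u \<bullet> v))
      = (\<Sum>r\<in>UNIV. \<Sum>k\<in>UNIV. if g k = r then f (g k) * (u $ k * v $ k) else 0)"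
    unfolding inner_cart sum_distrib_left by (intro sum.cong) auto
  also have "\<dots> = (\<Sum>k\<in>UNIV. f (g k) * (u $ k * v $ k))"
    by (subst sum.swap) simp
  finally show ?thesis .
qed

lemma sum_restr_inner:
  fixes g :: "'k::finite \<Rightarrow> 'r::finite"
  shows "(\<Sum>r\<in>UNIV. restr g r u \<bullet> v) = u \<bullet> v"
  using sum_restr_inner_weighted[of "\<lambda>_. 1" g u v] by (simp add: inner_cart)

lemma norm_restr_le: "norm (restr g c (v::real^'k::finite)) \<le> norm v"
  by (rule norm_le_componentwise_cart) simp

lemma norm_cmul_le:
  fixes v w :: "real^'k::finite"
  assumes v: "\<And>k. \<bar>v $ k\<bar> \<le> h"
  shows "norm (cmul v w) \<le> h * norm w"
proof -
  have h: "0 \<le> h" using v[of undefined] by linarith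
  have "norm (cmul v w) \<le> norm (\<chi> k. h * \<bar>w $ k\<bar>)"
    using v h by (intro norm_le_componentwise_cart) (simp add: abs_mult mult_right_mono)
  also have "\<dots> = h * norm w"
  proof -
    have "(\<chi> k. h * \<bar>w $ k\<bar>) = \<bar>h\<bar> *\<^sub>R (\<chi> k. \<bar>w $ k\<bar>)"
      using h by (simp add: vec_eq_iff)
    moreover have "norm (\<chi> k. \<bar>w $ k\<bar>) = norm w"
      unfolding norm_vec_def by simp
    ultimately show ?thesis using h by simp
  qed
  finally show ?thesis .
qed

lemma prod_set_eq_Inter: "prod_set g S = (\<Inter>c. restr g c -` S c)"
  by (auto simp: prod_set_def)

lemma closed_prod_set: "(\<And>c. closed (S c)) \<Longrightarrow> closed (prod_set g S)"
  unfolding prod_set_eq_Inter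
  by (intro closed_INT ballI continuous_closed_vimage linear_continuous_at)
     (auto simp: linear_restr linear_conv_bounded_linear[symmetric])

lemma convex_prod_set: "(\<And>c. convex (S c)) \<Longrightarrow> convex (prod_set g S)"
  unfolding prod_set_eq_Inter by (intro convex_INT convex_linear_vimage linear_restr) auto

lemma prod_set_nonempty:
  assumes "\<And>c. S c \<noteq> {}" and "\<And>c. S c \<subseteq> supported_on g c"
  shows "prod_set g S \<noteq> {}"
proof -
  have "\<forall>c. \<exists>v. v \<in> S c" using assms(1) by blast
  then obtain y where y: "\<And>c. y c \<in> S c" by metis
  define x where "x = (\<chi> k. y (g k) $ k)"
  have "restr g c x = y c" for c
    using assms(2)[of c] y[of c] by (auto simp: x_def vec_eq_iff supported_on_def)
  then have "x \<in> prod_set g S" using y by (simp add: prod_set_def)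
  then show ?thesis by auto
qed

lemma bounded_prod_set:
  fixes g :: "'k::finite \<Rightarrow> 'c"
  assumes "\<And>c. bounded (S c)"
  shows "bounded (prod_set g S)"
proof -
  have "\<forall>c. \<exists>b. \<forall>v\<in>S c. norm v \<le> b" using assms by (meson bounded_iff)
  then obtain B where B: "\<And>c v. v \<in> S c \<Longrightarrow> norm v \<le> B c" by metis
  have "norm x \<le> (\<Sum>k\<in>UNIV. B (g k))" if "x \<in> prod_set g S" for x
  proof -
    have "\<bar>x $ k\<bar> \<le> B (g k)" for k
    proof -
      have "\<bar>x $ k\<bar> = \<bar>restr g (g k) x $ k\<bar>" by simp
      also have "\<dots> \<le> norm (restr g (g k) x)" by (rule component_le_norm_cart)
      also have "\<dots> \<le> B (g k)" using B that by (auto simp: prod_set_def)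
      finally show ?thesis .
    qed
    then show ?thesis using norm_le_l1_cart[of x] by (meson order_trans sum_mono)
  qed
  then show ?thesis unfolding bounded_iff by blast
qed

lemma compact_prod_set:
  fixes g :: "'k::finite \<Rightarrow> 'c"
  shows "(\<And>c. compact (S c)) \<Longrightarrow> compact (prod_set g S)"
  by (simp add: compact_eq_bounded_closed closed_prod_set bounded_prod_set)

lemma upd_in_prod_set:
  "x \<in> prod_set g S \<Longrightarrow> y \<in> prod_set g S \<Longrightarrow> upd g c x y \<in> prod_set g S"
  by (auto simp: prod_set_def restr_upd)

lemma upd_block_in_prod_set:
  "x \<in> prod_set g S \<Longrightarrow> S c \<subseteq> supported_on g c \<Longrightarrow> y \<in> S c \<Longrightarrow> upd g c x y \<in> prod_set g S"
  using restr_supported[of y g c] by (auto simp: prod_set_def restr_upd)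

section \<open>Weighted inner products and block-weighted projections\<close>

definition weighted_inner :: "real^'k::finite \<Rightarrow> real^'k \<Rightarrow> real^'k \<Rightarrow> real" where
  "weighted_inner om u v = (\<Sum>k\<in>UNIV. om $ k * u $ k * v $ k)"

lemma weighted_inner_self_bounds:
  assumes "\<And>k. l \<le> om $ k" and "\<And>k. om $ k \<le> h"
  shows "l * (norm v)\<^sup>2 \<le> weighted_inner om v v" and "weighted_inner om v v \<le> h * (norm v)\<^sup>2"
  unfolding norm_sq_cart weighted_inner_def sum_distrib_left
  by (auto intro!: sum_mono simp: assms mult_right_mono mult.assoc simp flip: power2_eq_square)

lemma weighted_inner_self_nonneg: "(\<And>k. 0 \<le> om $ k) \<Longrightarrow> 0 \<le> weighted_inner om v v"
  unfolding weighted_inner_def by (intro sum_nonneg) (simp add: mult.assoc)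

text \<open>vi_b and vi_c are the projection inequalities of b = proj(a - eta g0) tested at c and
  of c = proj(a - eta g1) tested at y.\<close>
lemma optimistic_step_estimate:
  fixes a b c y g0 g1 om :: "real^'k::finite"
  assumes vi_b: "weighted_inner om (a - eta *\<^sub>R g0 - b) (c - b) \<le> 0"
    and vi_c: "weighted_inner om (a - eta *\<^sub>R g1 - c) (y - c) \<le> 0"
  shows "eta * weighted_inner om g1 (b - y)
    \<le> weighted_inner om (a - y) (a - y) / 2 - weighted_inner om (c - y) (c - y) / 2
       - weighted_inner om (b - a) (b - a) / 2 - weighted_inner om (c - b) (c - b) / 2
       + eta * weighted_inner om (g0 - g1) (c - b)"
proof -
  let ?rhs = "\<Sum>k\<in>UNIV. om $ k * ((a$k - y$k)\<^sup>2 / 2 - (c$k - y$k)\<^sup>2 / 2 - (b$k - a$k)\<^sup>2 / 2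
     - (c$k - b$k)\<^sup>2 / 2 + eta * (g0$k - g1$k) * (c$k - b$k))"
  have "eta * weighted_inner om g1 (b - y) = ?rhs
     + weighted_inner om (a - eta *\<^sub>R g0 - b) (c - b) + weighted_inner om (a - eta *\<^sub>R g1 - c) (y - c)"
    unfolding weighted_inner_def sum_distrib_left sum.distrib[symmetric]
    by (rule sum.cong) (simp_all add: power2_eq_square field_simps)
  also have "\<dots> \<le> ?rhs"
    using vi_b vi_c by linarith
  also have "?rhs = weighted_inner om (a - y) (a - y) / 2 - weighted_inner om (c - y) (c - y) / 2
       - weighted_inner om (b - a) (b - a) / 2 - weighted_inner om (c - b) (c - b) / 2
       + eta * weighted_inner om (g0 - g1) (c - b)"
    unfolding weighted_inner_def sum_distrib_left sum_divide_distrib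
      sum_subtractf[symmetric] sum.distrib[symmetric]
    by (rule sum.cong) (simp_all add: power2_eq_square algebra_simps)
  finally show ?thesis .
qed

lemma weighted_young:
  fixes om d e :: "real^'k::finite"
  assumes "\<And>k. 0 \<le> om $ k"
  shows "eta * weighted_inner om d e \<le> weighted_inner om e e / 4 + eta\<^sup>2 * weighted_inner om d d"
proof -
  have "eta * weighted_inner om d e = (\<Sum>k\<in>UNIV. om $ k * (eta * d $ k * e $ k))"
    unfolding weighted_inner_def sum_distrib_left by (rule sum.cong) (simp_all add: algebra_simps)
  also have "\<dots> \<le> (\<Sum>k\<in>UNIV. om $ k * ((e $ k)\<^sup>2 / 4 + eta\<^sup>2 * (d $ k)\<^sup>2))"
  proof (rule sum_mono)
    fix k
    have "eta * d $ k * e $ k \<le> (e $ k)\<^sup>2 / 4 + eta\<^sup>2 * (d $ k)\<^sup>2"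
      using sum_squares_ge_zero[of "e$k/2 - eta * d$k" 0]
      by (simp add: power2_eq_square algebra_simps)
    then show "om $ k * (eta * d $ k * e $ k) \<le> om $ k * ((e $ k)\<^sup>2 / 4 + eta\<^sup>2 * (d $ k)\<^sup>2)"
      using assms by (simp add: mult_left_mono)
  qed
  also have "\<dots> = weighted_inner om e e / 4 + eta\<^sup>2 * weighted_inner om d d"
    unfolding weighted_inner_def sum_distrib_left sum_divide_distrib sum.distrib[symmetric]
    by (rule sum.cong) (simp_all add: power2_eq_square algebra_simps)
  finally show ?thesis .
qed

text \<open>Moving only the block r of the projection towards y stays in the product set, so
  the projection inequality holds block by block and survives nonnegative block weights.\<close>
lemma proj_prod_set_weighted_vi:
  fixes g :: "'k::finite \<Rightarrow> 'r::finite"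
  assumes X: "X = prod_set g Zs" "convex X" "closed X" and y: "y \<in> X"
    and w: "\<And>k. 0 \<le> blockvec g w x $ k"
  shows "weighted_inner (blockvec g w x) (z - proj X z) (y - proj X z) \<le> 0"
proof -
  let ?p = "proj X z"
  have p: "?p \<in> X" using y X by (auto simp: proj_def intro: closest_point_in_set)
  have block: "restr g r (z - ?p) \<bullet> (y - ?p) \<le> 0" for r
  proof -
    have "upd g r ?p y \<in> X" using upd_in_prod_set p y X(1) by metis
    then have "(z - ?p) \<bullet> (upd g r ?p y - ?p) \<le> 0"
      using closest_point_dot[OF X(2,3)] by (simp add: proj_def)
    also have "(z - ?p) \<bullet> (upd g r ?p y - ?p) = restr g r (z - ?p) \<bullet> (y - ?p)"
      unfolding inner_cart by (rule sum.cong) auto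
    finally show ?thesis .
  qed
  have "weighted_inner (blockvec g w x) (z - ?p) (y - ?p)
      = (\<Sum>r\<in>UNIV. w r x * (restr g r (z - ?p) \<bullet> (y - ?p)))"
    unfolding weighted_inner_def sum_restr_inner_weighted by (simp add: mult.assoc)
  also have "\<dots> \<le> 0"
  proof (rule sum_nonpos)
    fix r
    show "w r x * (restr g r (z - ?p) \<bullet> (y - ?p)) \<le> 0"
    proof (cases "\<exists>k. g k = r")
      case True
      then show ?thesis using w block by (metis blockvec_nth mult_nonneg_nonpos)
    next
      case False
      then have "restr g r (z - ?p) = 0" by (simp add: vec_eq_iff)
      then show ?thesis by simp
    qed
  qed
  finally show ?thesis .
qed

lemma norm_rescaled_diff_sq_le:
  fixes F :: "real^'k::finite \<Rightarrow> real^'k" and blk :: "'k \<Rightarrow> 'r::finite"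
  assumes F: "norm (F x - F y) \<le> L * norm (x - y)"
    and a: "\<And>r. \<bar>a r x - a r y\<bar> \<le> alpha * norm (x - y)"
    and A: "\<And>k. \<bar>a (blk k) x\<bar> \<le> h"
    and B: "\<And>r. norm (restr blk r (F y)) \<le> B"
  shows "(norm (cmul (blockvec blk a x) (F x) - cmul (blockvec blk a y) (F y)))\<^sup>2
     \<le> 2 * (h\<^sup>2 * L\<^sup>2 + real CARD('r) * alpha\<^sup>2 * B\<^sup>2) * (norm (x - y))\<^sup>2"
proof -
  let ?n = "norm (x - y)" and ?d = "blockvec blk a x - blockvec blk a y"
  have h: "0 \<le> h" using A[of undefined] by linarith
  have split: "cmul (blockvec blk a x) (F x) - cmul (blockvec blk a y) (F y)
      = cmul (blockvec blk a x) (F x - F y) + cmul ?d (F y)"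
    by (simp add: vec_eq_iff algebra_simps)
  have "norm (cmul (blockvec blk a x) (F x - F y)) \<le> h * norm (F x - F y)"
    by (rule norm_cmul_le) (simp add: A)
  also have "\<dots> \<le> h * (L * ?n)"
    using F h by (rule mult_left_mono)
  finally have p: "norm (cmul (blockvec blk a x) (F x - F y)) \<le> h * (L * ?n)" .
  have "(norm (cmul ?d (F y)))\<^sup>2 = (\<Sum>r\<in>UNIV. (a r x - a r y)\<^sup>2 * (restr blk r (F y) \<bullet> F y))"
    unfolding norm_sq_cart sum_restr_inner_weighted by (simp add: power2_eq_square algebra_simps)
  also have "\<dots> \<le> (\<Sum>r\<in>(UNIV::'r set). (alpha * ?n)\<^sup>2 * B\<^sup>2)"
  proof (rule sum_mono)
    fix r
    have "restr blk r (F y) \<bullet> F y = (norm (restr blk r (F y)))\<^sup>2"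
      unfolding power2_norm_eq_inner inner_cart by (rule sum.cong) auto
    moreover have "(norm (restr blk r (F y)))\<^sup>2 \<le> B\<^sup>2" using B[of r] by (simp add: power_mono)
    moreover have "(a r x - a r y)\<^sup>2 \<le> (alpha * ?n)\<^sup>2"
      using a[of r] by (metis abs_ge_zero power2_abs power_mono)
    ultimately show "(a r x - a r y)\<^sup>2 * (restr blk r (F y) \<bullet> F y) \<le> (alpha * ?n)\<^sup>2 * B\<^sup>2"
      by (simp add: mult_mono)
  qed
  finally have q: "(norm (cmul ?d (F y)))\<^sup>2 \<le> real CARD('r) * alpha\<^sup>2 * B\<^sup>2 * ?n\<^sup>2"
    by (simp add: power_mult_distrib algebra_simps)
  let ?p = "norm (cmul (blockvec blk a x) (F x - F y))" and ?q = "norm (cmul ?d (F y))"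
  have "(norm (cmul (blockvec blk a x) (F x) - cmul (blockvec blk a y) (F y)))\<^sup>2 \<le> (?p + ?q)\<^sup>2"
    unfolding split by (intro power_mono norm_triangle_ineq) simp
  also have "\<dots> \<le> 2 * ?p\<^sup>2 + 2 * ?q\<^sup>2"
    using zero_le_power2[of "?p - ?q"] by (simp add: power2_eq_square algebra_simps)
  also have "\<dots> \<le> 2 * (h * (L * ?n))\<^sup>2 + 2 * (real CARD('r) * alpha\<^sup>2 * B\<^sup>2 * ?n\<^sup>2)"
    using p q by (intro add_mono mult_left_mono power_mono) auto
  also have "\<dots> = 2 * (h\<^sup>2 * L\<^sup>2 + real CARD('r) * alpha\<^sup>2 * B\<^sup>2) * ?n\<^sup>2"
    by (simp add: power_mult_distrib algebra_simps)
  finally show ?thesis .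
qed

text \<open>Undoing the rescaling: testing against points that differ from x in one block r
  isolates a_r(x) \<ge> l, so each block contributes at most S / l.\<close>
lemma inner_le_of_rescaled_gap:
  fixes blk :: "'k::finite \<Rightarrow> 'r::finite"
  assumes X: "X = prod_set blk Zs" and x: "x \<in> X" and y: "y \<in> X" and S: "0 \<le> S" and l: "0 < l"
    and a: "\<And>k. l \<le> a (blk k) x"
    and gap: "\<And>z. z \<in> X \<Longrightarrow> cmul (blockvec blk a x) v \<bullet> (x - z) \<le> S"
  shows "v \<bullet> (x - y) \<le> real CARD('r) * S / l"
proof -
  have block: "restr blk r v \<bullet> (x - y) \<le> S / l" for r
  proof (cases "\<exists>k. blk k = r")
    case True
    then obtain k where k: "blk k = r" by blast
    have "cmul (blockvec blk a x) v \<bullet> (x - upd blk r x y) = a r x * (restr blk r v \<bullet> (x - y))"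
      unfolding inner_cart sum_distrib_left by (rule sum.cong) auto
    then have le: "a r x * (restr blk r v \<bullet> (x - y)) \<le> S"
      using gap upd_in_prod_set x y X by metis
    have "l \<le> a r x" using a[of k] k by simp
    have "l * (restr blk r v \<bullet> (x - y)) \<le> S"
    proof (cases "restr blk r v \<bullet> (x - y) \<le> 0")
      case True
      then show ?thesis using S l by (meson mult_pos_neg order.strict_implies_order
            order_trans eq_refl mult_le_0_iff less_eq_real_def)
    next
      case False
      then have "l * (restr blk r v \<bullet> (x - y)) \<le> a r x * (restr blk r v \<bullet> (x - y))"
        using \<open>l \<le> a r x\<close> by (intro mult_right_mono) auto
      then show ?thesis using le by linarith
    qed
    then show ?thesis using l by (simp add: pos_le_divide_eq mult.commute)
  next
    case False
    then have "restr blk r v = 0" by (simp add: vec_eq_iff)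
    then show ?thesis using S l by simp
  qed
  have "v \<bullet> (x - y) = (\<Sum>r\<in>UNIV. restr blk r v \<bullet> (x - y))"
    by (rule sum_restr_inner[symmetric])
  also have "\<dots> \<le> (\<Sum>r\<in>(UNIV::'r set). S / l)"
    using block by (rule sum_mono)
  finally show ?thesis by simp
qed

section \<open>The descent lemma\<close>

lemma frechet_derivative_eq_grad_inner:
  fixes f :: "real^'k::finite \<Rightarrow> real"
  assumes "f differentiable (at z)"
  shows "frechet_derivative f (at z) v = grad f z \<bullet> v"
proof -
  let ?D = "frechet_derivative f (at z)"
  have lin: "linear ?D" using assms by (rule linear_frechet_derivative)
  have "?D v = ?D (\<Sum>i\<in>UNIV. v $ i *\<^sub>R axis i 1)"
    using basis_expansion[of v] by (simp add: scalar_mult_eq_scaleR)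
  also have "\<dots> = (\<Sum>i\<in>UNIV. v $ i * ?D (axis i 1))"
    by (simp add: linear_sum[OF lin] linear_cmul[OF lin])
  also have "\<dots> = grad f z \<bullet> v"
    by (simp add: inner_cart grad_def mult.commute)
  finally show ?thesis .
qed

lemma has_real_derivative_along_line:
  fixes f :: "real^'k::finite \<Rightarrow> real"
  assumes "f differentiable (at (x + s *\<^sub>R v))"
  shows "((\<lambda>t. f (x + t *\<^sub>R v)) has_real_derivative (grad f (x + s *\<^sub>R v) \<bullet> v)) (at s)"
proof -
  let ?D = "frechet_derivative f (at (x + s *\<^sub>R v))"
  have "(f has_derivative ?D) (at (x + s *\<^sub>R v))"
    using assms frechet_derivative_works by blast
  moreover have "((\<lambda>t. x + t *\<^sub>R v) has_derivative (\<lambda>t. t *\<^sub>R v)) (at s)"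
    by (auto intro!: derivative_eq_intros)
  ultimately have "((\<lambda>t. f (x + t *\<^sub>R v)) has_derivative (\<lambda>t. ?D (t *\<^sub>R v))) (at s)"
    using has_derivative_compose by (fastforce simp: o_def)
  moreover have "(\<lambda>t. ?D (t *\<^sub>R v)) = (*) (grad f (x + s *\<^sub>R v) \<bullet> v)"
    using linear_frechet_derivative[OF assms] frechet_derivative_eq_grad_inner[OF assms]
    by (auto simp: fun_eq_iff linear_cmul)
  ultimately show ?thesis by (simp add: has_field_derivative_def)
qed

lemma quadratic_upper_bound_along_segment:
  fixes f :: "real^'k::finite \<Rightarrow> real"
  assumes diff: "\<And>s. 0 \<le> s \<Longrightarrow> s \<le> 1 \<Longrightarrow> f differentiable (at (x + s *\<^sub>R v))"
    and lip: "\<And>s. 0 \<le> s \<Longrightarrow> s \<le> 1 \<Longrightarrow>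
      (grad f (x + s *\<^sub>R v) - grad f x) \<bullet> v \<le> L * s * (norm v)\<^sup>2"
  shows "f (x + v) \<le> f x + grad f x \<bullet> v + L / 2 * (norm v)\<^sup>2"
proof -
  define psi where "psi t = f (x + t *\<^sub>R v) - t * (grad f x \<bullet> v) - L / 2 * t\<^sup>2 * (norm v)\<^sup>2" for t
  have "psi 1 \<le> psi 0"
  proof (rule DERIV_nonpos_imp_nonincreasing[of 0 1])
    fix s :: real assume s: "0 \<le> s" "s \<le> 1"
    have "(psi has_real_derivative
        (grad f (x + s *\<^sub>R v) \<bullet> v - grad f x \<bullet> v - L * s * (norm v)\<^sup>2)) (at s)"
      unfolding psi_def
      by (intro derivative_eq_intros has_real_derivative_along_line[OF diff[OF s]])
         (auto simp: power2_eq_square has_real_derivative_along_line[OF diff[OF s]])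
    moreover have "grad f (x + s *\<^sub>R v) \<bullet> v - grad f x \<bullet> v - L * s * (norm v)\<^sup>2 \<le> 0"
      using lip[OF s] by (simp add: inner_diff_left)
    ultimately show "\<exists>y. (psi has_real_derivative y) (at s) \<and> y \<le> 0" by blast
  qed simp
  then show ?thesis unfolding psi_def by simp
qed

section \<open>Potential analysis of rescaled optimistic gradient descent\<close>

lemma ex_le_mean:
  fixes f :: "nat \<Rightarrow> real"
  assumes "0 < T"
  shows "\<exists>t<T. real T * f t \<le> (\<Sum>s<T. f s)"
proof -
  have "Min (f ` {..<T}) \<in> f ` {..<T}" using assms by (intro Min_in) auto
  then obtain t where t: "t < T" "f t = Min (f ` {..<T})" by auto
  have "f t \<le> f s" if "s < T" for s
    unfolding t(2) using that by (intro Min_le) auto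
  then have "real (card {..<T}) * f t \<le> (\<Sum>s<T. f s)"
    by (intro sum_bounded_below) simp
  then show ?thesis using t by auto
qed

locale rogd_run =
  fixes X :: "(real^'k::finite) set" and F A :: "real^'k \<Rightarrow> real^'k" and eta :: real
    and x0 :: "real^'k"
  assumes closed_X: "closed X" and convex_X: "convex X" and x0_in_X: "x0 \<in> X"
    and eta_pos: "0 < eta"
begin

abbreviation xt :: "nat \<Rightarrow> real^'k" where
  "xt \<equiv> rogd_x X F A eta x0"

text \<open>Off by one: xh t is the paper's xhat^(t+1).\<close>
definition xh :: "nat \<Rightarrow> real^'k" where
  "xh t = snd (rogd X F A eta x0 t)"

abbreviation gt :: "nat \<Rightarrow> real^'k" where
  "gt t \<equiv> cmul (A (xt t)) (F (xt t))"

lemma xt_0: "xt 0 = x0" and xh_0: "xh 0 = x0"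
  by (simp_all add: rogd_x_def xh_def)

lemma xt_Suc: "xt (Suc t) = proj X (xh t - eta *\<^sub>R gt t)"
  and xh_Suc: "xh (Suc t) = proj X (xh t - eta *\<^sub>R gt (Suc t))"
  by (simp_all add: rogd_x_def xh_def Let_def)

lemma proj_in_X: "proj X z \<in> X"
  using closed_X x0_in_X by (auto simp: proj_def intro: closest_point_in_set)

lemma xt_in_X: "xt t \<in> X" and xh_in_X: "xh t \<in> X"
  by (cases t; simp add: xt_0 xh_0 x0_in_X xt_Suc xh_Suc proj_in_X)+

text \<open>Once the two residuals of step t + 1 are small, x^(t+1) nearly solves the variational
  inequality of the rescaled operator: the projection inequality defining xhat^(t+1)
  controls the gap at xhat^(t+1), and x^(t+1) is close to it.\<close>
lemma rescaled_gap_le: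
  assumes rho1: "norm (xt (Suc t) - xh t) \<le> rho" and rho2: "norm (xh (Suc t) - xt (Suc t)) \<le> rho"
    and D: "\<And>x y. x \<in> X \<Longrightarrow> y \<in> X \<Longrightarrow> norm (x - y) \<le> D"
    and Gm: "norm (gt (Suc t)) \<le> Gm" and y: "y \<in> X"
  shows "gt (Suc t) \<bullet> (xt (Suc t) - y) \<le> (2 * D / eta + Gm) * rho"
proof -
  let ?x = "xt (Suc t)" and ?g = "gt (Suc t)"
  have rho: "0 \<le> rho" using rho1 norm_ge_zero order_trans by blast
  have "(xh t - eta *\<^sub>R ?g - xh (Suc t)) \<bullet> (y - xh (Suc t)) \<le> 0"
    unfolding xh_Suc proj_def by (rule closest_point_dot[OF convex_X closed_X y])
  then have "eta * (?g \<bullet> (xh (Suc t) - y)) \<le> (xh t - xh (Suc t)) \<bullet> (xh (Suc t) - y)"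
    by (simp add: inner_diff_left inner_diff_right algebra_simps)
  also have "\<dots> \<le> norm (xh t - xh (Suc t)) * norm (xh (Suc t) - y)"
    by (rule norm_cauchy_schwarz)
  also have "\<dots> \<le> (2 * rho) * D"
  proof (rule mult_mono)
    have "norm (xh t - xh (Suc t)) \<le> norm (xh t - ?x) + norm (?x - xh (Suc t))"
      using norm_triangle_ineq[of "xh t - ?x" "?x - xh (Suc t)"] by simp
    then show "norm (xh t - xh (Suc t)) \<le> 2 * rho"
      using rho1 rho2 by (simp add: norm_minus_commute)
  qed (use rho D xh_in_X y in auto)
  finally have "?g \<bullet> (xh (Suc t) - y) \<le> 2 * D / eta * rho"
    using eta_pos by (simp add: field_simps)
  moreover have "?g \<bullet> (?x - xh (Suc t)) \<le> norm ?g * norm (?x - xh (Suc t))"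
    by (rule norm_cauchy_schwarz)
  moreover have "norm ?g * norm (?x - xh (Suc t)) \<le> Gm * rho"
    using Gm rho2 by (intro mult_mono) (auto simp: norm_minus_commute intro: order_trans[OF norm_ge_zero])
  moreover have "?g \<bullet> (?x - y) = ?g \<bullet> (xh (Suc t) - y) + ?g \<bullet> (?x - xh (Suc t))"
    by (simp add: inner_diff_right)
  ultimately show ?thesis by (simp add: algebra_simps)
qed

end

text \<open>The potential argument for the optimistic iteration, measured in the norm weighted
  by om = W(xstar) at the Minty point xstar.\<close>
locale rogd_potential = rogd_run X F A eta x0
  for X :: "(real^'k::finite) set" and F A eta x0 +
  fixes om :: "real^'k" and l h :: real and xstar :: "real^'k"
  assumes l_pos: "0 < l" and om_lower: "\<And>k. l \<le> om $ k" and om_upper: "\<And>k. om $ k \<le> h"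
    and proj_weighted_vi: "\<And>z y. y \<in> X \<Longrightarrow> weighted_inner om (z - proj X z) (y - proj X z) \<le> 0"
    and xstar_in_X: "xstar \<in> X"
    and step_size: "\<And>x y. x \<in> X \<Longrightarrow> y \<in> X \<Longrightarrow>
      h * eta\<^sup>2 * (norm (cmul (A x) (F x) - cmul (A y) (F y)))\<^sup>2 \<le> l / 8 * (norm (x - y))\<^sup>2"
begin

text \<open>The second term pays for the part of the next extrapolation error that involves the
  previous step.\<close>
definition potential :: "nat \<Rightarrow> real" where
  "potential t = weighted_inner om (xh t - xstar) (xh t - xstar) / 2
     + 3 * l / 16 * (norm (xh t - xt t))\<^sup>2"

lemma om_nonneg: "0 \<le> om $ k"
  using om_lower[of k] l_pos by linarith

lemma extrapolation_error_le:
  "eta\<^sup>2 * weighted_inner om (gt t - gt (Suc t)) (gt t - gt (Suc t))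
     \<le> 3 / 8 * (l * (norm (xt (Suc t) - xh t))\<^sup>2) + 3 / 16 * (l * (norm (xh t - xt t))\<^sup>2)"
proof -
  let ?a = "xh t" and ?b = "xt (Suc t)"
  have "norm (?b - xt t) \<le> norm (?b - ?a) + norm (?a - xt t)"
    using norm_triangle_ineq[of "?b - ?a" "?a - xt t"] by simp
  then have "(norm (?b - xt t))\<^sup>2 \<le> (norm (?b - ?a) + norm (?a - xt t))\<^sup>2"
    by (simp add: power_mono)
  also have "\<dots> \<le> 3 * (norm (?b - ?a))\<^sup>2 + 3 / 2 * (norm (?a - xt t))\<^sup>2"
    using zero_le_power2[of "norm (?b - ?a) - norm (?a - xt t) / 2"]
    by (simp add: power2_eq_square algebra_simps)
  finally have dx: "(norm (?b - xt t))\<^sup>2 \<le> 3 * (norm (?b - ?a))\<^sup>2 + 3 / 2 * (norm (?a - xt t))\<^sup>2" .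
  have "eta\<^sup>2 * weighted_inner om (gt t - gt (Suc t)) (gt t - gt (Suc t))
      \<le> eta\<^sup>2 * (h * (norm (gt (Suc t) - gt t))\<^sup>2)"
    using weighted_inner_self_bounds(2)[OF om_lower om_upper, of "gt t - gt (Suc t)"]
    by (simp add: norm_minus_commute mult_left_mono)
  also have "\<dots> \<le> l / 8 * (norm (?b - xt t))\<^sup>2"
    using step_size[OF xt_in_X xt_in_X] by (simp add: algebra_simps)
  also have "\<dots> \<le> l / 8 * (3 * (norm (?b - ?a))\<^sup>2 + 3 / 2 * (norm (?a - xt t))\<^sup>2)"
    using dx l_pos by simp
  also have "\<dots> = 3 / 8 * (l * (norm (?b - ?a))\<^sup>2) + 3 / 16 * (l * (norm (?a - xt t))\<^sup>2)"
    by (simp add: algebra_simps)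
  finally show ?thesis .
qed

lemma potential_decrease:
  "eta * weighted_inner om (gt (Suc t)) (xt (Suc t) - xstar)
     + l / 8 * (norm (xt (Suc t) - xh t))\<^sup>2 + l / 16 * (norm (xh (Suc t) - xt (Suc t)))\<^sup>2
   \<le> potential t - potential (Suc t)"
proof -
  let ?a = "xh t" and ?b = "xt (Suc t)" and ?c = "xh (Suc t)"
  have vi_b: "weighted_inner om (?a - eta *\<^sub>R gt t - ?b) (?c - ?b) \<le> 0"
    unfolding xt_Suc by (rule proj_weighted_vi[OF xh_in_X])
  have vi_c: "weighted_inner om (?a - eta *\<^sub>R gt (Suc t) - ?c) (xstar - ?c) \<le> 0"
    unfolding xh_Suc by (rule proj_weighted_vi[OF xstar_in_X])
  have young: "eta * weighted_inner om (gt t - gt (Suc t)) (?c - ?b)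
      \<le> weighted_inner om (?c - ?b) (?c - ?b) / 4
         + eta\<^sup>2 * weighted_inner om (gt t - gt (Suc t)) (gt t - gt (Suc t))"
    by (rule weighted_young[OF om_nonneg])
  note extrapolation = extrapolation_error_le[of t]
  have "l * (norm (?b - ?a))\<^sup>2 \<le> weighted_inner om (?b - ?a) (?b - ?a)"
    and "l * (norm (?c - ?b))\<^sup>2 \<le> weighted_inner om (?c - ?b) (?c - ?b)"
    by (rule weighted_inner_self_bounds(1)[OF om_lower om_upper])+
  with optimistic_step_estimate[OF vi_b vi_c] young extrapolation show ?thesis
    unfolding potential_def by linarith
qed

lemma residuals_sum_le:
  assumes minty: "0 \<le> (\<Sum>t=1..T. weighted_inner om (gt t) (xt t - xstar))"
  shows "(\<Sum>t<T. (norm (xt (Suc t) - xh t))\<^sup>2 + (norm (xh (Suc t) - xt (Suc t)))\<^sup>2)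
    \<le> 8 * h / l * (norm (x0 - xstar))\<^sup>2"
proof -
  let ?m = "\<lambda>t. weighted_inner om (gt t) (xt t - xstar)"
    and ?r = "\<lambda>t. (norm (xt (Suc t) - xh t))\<^sup>2 + (norm (xh (Suc t) - xt (Suc t)))\<^sup>2"
  have "l / 16 * ?r t \<le> potential t - potential (Suc t) - eta * ?m (Suc t)" for t
  proof -
    have "l / 16 * (norm (xt (Suc t) - xh t))\<^sup>2 \<le> l / 8 * (norm (xt (Suc t) - xh t))\<^sup>2"
      using l_pos by (intro mult_right_mono) auto
    moreover have "l / 16 * ?r t = l / 16 * (norm (xt (Suc t) - xh t))\<^sup>2
        + l / 16 * (norm (xh (Suc t) - xt (Suc t)))\<^sup>2"
      by (rule distrib_left)
    ultimately show ?thesis using potential_decrease[of t] by linarith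
  qed
  then have "l / 16 * (\<Sum>t<T. ?r t) \<le> (\<Sum>t<T. potential t - potential (Suc t)) - eta * (\<Sum>t<T. ?m (Suc t))"
    unfolding sum_distrib_left sum_subtractf[symmetric] by (rule sum_mono)
  also have "\<dots> = potential 0 - potential T - eta * (\<Sum>t=1..T. ?m t)"
    by (simp add: sum_lessThan_telescope' sum.atLeast1_atMost_eq)
  also have "\<dots> \<le> potential 0"
  proof -
    have "0 \<le> potential T"
      unfolding potential_def using weighted_inner_self_nonneg[OF om_nonneg] l_pos by simp
    moreover have "0 \<le> eta * (\<Sum>t=1..T. ?m t)" using minty eta_pos by simp
    ultimately show ?thesis by linarith
  qed
  also have "\<dots> \<le> h / 2 * (norm (x0 - xstar))\<^sup>2"
    using weighted_inner_self_bounds(2)[OF om_lower om_upper, of "x0 - xstar"]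
    by (simp add: potential_def xt_0 xh_0)
  finally have "l * (\<Sum>t<T. ?r t) \<le> 8 * h * (norm (x0 - xstar))\<^sup>2"
    by linarith
  also have "\<dots> = l * (8 * h / l * (norm (x0 - xstar))\<^sup>2)"
    using l_pos by simp
  finally show ?thesis using l_pos by (rule mult_left_le_imp_le)
qed

text \<open>Summing the potential decrease, the average residual is O(1/T).\<close>
lemma ex_small_residuals:
  assumes minty: "0 \<le> (\<Sum>t=1..T. weighted_inner om (gt t) (xt t - xstar))"
    and D: "norm (x0 - xstar) \<le> D" and T: "0 < T"
  defines "rho \<equiv> sqrt (8 * h / l * D\<^sup>2 / real T)"
  shows "\<exists>t<T. norm (xt (Suc t) - xh t) \<le> rho \<and> norm (xh (Suc t) - xt (Suc t)) \<le> rho"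
proof -
  let ?r = "\<lambda>t. (norm (xt (Suc t) - xh t))\<^sup>2 + (norm (xh (Suc t) - xt (Suc t)))\<^sup>2"
  obtain t where t: "t < T" "real T * ?r t \<le> (\<Sum>s<T. ?r s)"
    using ex_le_mean[OF T, of ?r] by blast
  have h: "0 \<le> h" using om_lower[of undefined] om_upper[of undefined] l_pos by linarith
  have bound_nonneg: "0 \<le> 8 * h / l * D\<^sup>2 / real T" using h l_pos by simp
  have "real T * ?r t \<le> 8 * h / l * (norm (x0 - xstar))\<^sup>2"
    using t(2) residuals_sum_le[OF minty] by linarith
  also have "\<dots> \<le> 8 * h / l * D\<^sup>2"
    using D h l_pos by (intro mult_left_mono power_mono) auto
  finally have "?r t * real T \<le> 8 * h / l * D\<^sup>2"
    by (simp only: mult.commute)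
  then have "?r t \<le> 8 * h / l * D\<^sup>2 / real T"
    using T by (subst pos_le_divide_eq) simp_all
  also have "\<dots> = rho\<^sup>2"
    unfolding rho_def using bound_nonneg by simp
  finally have "?r t \<le> rho\<^sup>2" .
  then have "(norm (xt (Suc t) - xh t))\<^sup>2 \<le> rho\<^sup>2" and "(norm (xh (Suc t) - xt (Suc t)))\<^sup>2 \<le> rho\<^sup>2"
    using zero_le_power2[of "norm (xt (Suc t) - xh t)"] zero_le_power2[of "norm (xh (Suc t) - xt (Suc t))"]
    by linarith+
  moreover have "0 \<le> rho" unfolding rho_def using bound_nonneg by simp
  ultimately show ?thesis using t(1) power2_le_imp_le by blast
qed

end

lemma norm_restr_le_BF:
  assumes Fm: "\<And>x. x \<in> X \<Longrightarrow> norm (F x) \<le> Fm" and x: "x \<in> X"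
  shows "norm (restr blk r (F x)) \<le> BF blk X F"
  unfolding BF_def
proof (rule cSup_upper)
  show "bdd_above {norm (restr blk r (F x)) |r x. x \<in> X}"
  proof (rule bdd_aboveI)
    fix b assume "b \<in> {norm (restr blk r (F x)) |r x. x \<in> X}"
    then obtain r' x' where "b = norm (restr blk r' (F x'))" "x' \<in> X" by blast
    then show "b \<le> Fm" using norm_restr_le[of blk r' "F x'"] Fm[of x'] by simp
  qed
qed (use x in blast)

lemma eta_sq_le:
  fixes eta l K :: real
  assumes eta: "0 < eta" "eta \<le> 1/4 * sqrt (l / K)" and l: "0 < l" and K: "0 \<le> K"
  shows "eta\<^sup>2 * K \<le> l / 16"
proof (cases "K = 0")
  case True
  then show ?thesis using l by simp
next
  case False
  with K have K: "0 < K" by simp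
  have "(4 * eta)\<^sup>2 \<le> (sqrt (l / K))\<^sup>2"
    using eta by (intro power_mono) simp_all
  also have "\<dots> = l / K"
    using l K by simp
  finally have "16 * eta\<^sup>2 \<le> l / K" by (simp add: power_mult_distrib)
  then show ?thesis using K by (simp add: pos_le_divide_eq)
qed

lemma rescaled_step_size:
  fixes F :: "real^'k::finite \<Rightarrow> real^'k" and blk :: "'k \<Rightarrow> 'r::finite"
  assumes F: "norm (F x - F y) \<le> L * norm (x - y)"
    and a: "\<And>r. \<bar>a r x - a r y\<bar> \<le> alpha * norm (x - y)"
    and A: "\<And>k. \<bar>a (blk k) x\<bar> \<le> h" and B: "\<And>r. norm (restr blk r (F y)) \<le> B"
    and eta: "0 < eta" "eta \<le> 1/4 * sqrt (l / (h^3 * L\<^sup>2 + h * B\<^sup>2 * alpha\<^sup>2 * real CARD('r)))"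
    and l: "0 < l"
  shows "h * eta\<^sup>2 * (norm (cmul (blockvec blk a x) (F x) - cmul (blockvec blk a y) (F y)))\<^sup>2
    \<le> l / 8 * (norm (x - y))\<^sup>2"
proof -
  let ?K = "h^3 * L\<^sup>2 + h * B\<^sup>2 * alpha\<^sup>2 * real CARD('r)"
  have h: "0 \<le> h" using A[of undefined] by linarith
  have "h * eta\<^sup>2 * (norm (cmul (blockvec blk a x) (F x) - cmul (blockvec blk a y) (F y)))\<^sup>2
      \<le> h * eta\<^sup>2 * (2 * (h\<^sup>2 * L\<^sup>2 + real CARD('r) * alpha\<^sup>2 * B\<^sup>2) * (norm (x - y))\<^sup>2)"
    using norm_rescaled_diff_sq_le[where F=F and a=a and blk=blk, OF F a A B] h by (intro mult_left_mono) auto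
  also have "\<dots> = 2 * (eta\<^sup>2 * ?K) * (norm (x - y))\<^sup>2"
  proof -
    have "?K = h * (h\<^sup>2 * L\<^sup>2 + real CARD('r) * alpha\<^sup>2 * B\<^sup>2)"
      by (simp add: power3_eq_cube power2_eq_square algebra_simps)
    then show ?thesis by (simp only: ac_simps)
  qed
  also have "\<dots> \<le> 2 * (l / 16) * (norm (x - y))\<^sup>2"
  proof -
    have "eta\<^sup>2 * ?K \<le> l / 16" using eta l h by (intro eta_sq_le) auto
    then show ?thesis by (intro mult_right_mono) auto
  qed
  also have "\<dots> = l / 8 * (norm (x - y))\<^sup>2"
    by simp
  finally show ?thesis .
qed

section \<open>Convergence rate of the variational-inequality gap\<close>

locale rogd_setting =
  fixes X :: "(real^'k::finite) set" and F :: "real^'k \<Rightarrow> real^'k"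
    and blk :: "'k \<Rightarrow> 'r::finite" and Zs :: "'r \<Rightarrow> (real^'k) set"
    and a w :: "'r \<Rightarrow> real^'k \<Rightarrow> real" and L alpha l h eta :: real
  assumes X_prodZ: "X = prod_set blk Zs"
    and compact_X: "compact X" and convex_X: "convex X" and X_nonempty: "X \<noteq> {}"
    and F_lip: "\<forall>x\<in>X. \<forall>y\<in>X. norm (F x - F y) \<le> L * norm (x - y)"
    and a_lip: "\<forall>r. \<forall>x\<in>X. \<forall>y\<in>X. \<bar>a r x - a r y\<bar> \<le> alpha * norm (x - y)"
    and l_pos: "0 < l"
    and A_bounds: "\<forall>x\<in>X. \<forall>k. l \<le> blockvec blk a x $ k \<and> blockvec blk a x $ k \<le> h"
    and W_bounds: "\<forall>x\<in>X. \<forall>k. l \<le> blockvec blk w x $ k \<and> blockvec blk w x $ k \<le> h"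
    and minty: "avg_minty X F (blockvec blk a) (blockvec blk w)"
    and eta_pos: "0 < eta"
    and eta_le: "eta \<le> 1/4 * sqrt (l / (h^3 * L\<^sup>2 + h * (BF blk X F)\<^sup>2 * alpha\<^sup>2 * real CARD('r)))"
begin

abbreviation iterate :: "real^'k \<Rightarrow> nat \<Rightarrow> real^'k" where
  "iterate x0 t \<equiv> rogd_x X F (blockvec blk a) eta x0 t"

lemma closed_X: "closed X"
  using compact_X by (rule compact_imp_closed)

lemma h_nonneg: "0 \<le> h"
  using A_bounds X_nonempty l_pos by (meson all_not_in_conv order_trans less_imp_le)

lemma A_abs_le:
  assumes "x \<in> X" shows "\<bar>a (blk k) x\<bar> \<le> h"
proof -
  have "l \<le> a (blk k) x" and "a (blk k) x \<le> h" using A_bounds assms by auto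
  then show ?thesis using l_pos by (simp add: abs_le_iff)
qed

lemma norm_diff_le_diameter: "x \<in> X \<Longrightarrow> y \<in> X \<Longrightarrow> norm (x - y) \<le> diameter X"
  using diameter_bounded_bound[OF compact_imp_bounded[OF compact_X]] by (simp add: dist_norm)

lemma F_bounded:
  obtains Fm where "\<And>x. x \<in> X \<Longrightarrow> norm (F x) \<le> Fm"
proof -
  obtain x1 where x1: "x1 \<in> X" using X_nonempty by blast
  have "norm (F x) \<le> norm (F x1) + \<bar>L\<bar> * diameter X" if x: "x \<in> X" for x
  proof -
    have "norm (F x) \<le> norm (F x1) + L * norm (x - x1)"
      using norm_triangle_sub[of "F x" "F x1"] F_lip x x1 by fastforce
    moreover have "L * norm (x - x1) \<le> \<bar>L\<bar> * diameter X"
      using norm_diff_le_diameter[OF x x1]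
      by (meson abs_ge_self abs_ge_zero mult_mono norm_ge_zero order_trans)
    ultimately show ?thesis by linarith
  qed
  then show ?thesis using that by blast
qed

lemma rescaled_op_bounded:
  obtains Gm where "0 \<le> Gm" and "\<And>x. x \<in> X \<Longrightarrow> norm (cmul (blockvec blk a x) (F x)) \<le> Gm"
proof -
  obtain Fm where Fm: "\<And>x. x \<in> X \<Longrightarrow> norm (F x) \<le> Fm" using F_bounded by blast
  have "norm (cmul (blockvec blk a x) (F x)) \<le> h * Fm" if "x \<in> X" for x
  proof -
    have "norm (cmul (blockvec blk a x) (F x)) \<le> h * norm (F x)"
      by (rule norm_cmul_le) (simp add: A_abs_le[OF that])
    also have "\<dots> \<le> h * Fm" using Fm[OF that] h_nonneg by (rule mult_left_mono)
    finally show ?thesis .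
  qed
  moreover have "0 \<le> h * Fm"
    using X_nonempty Fm h_nonneg by (meson all_not_in_conv norm_ge_zero order_trans zero_le_mult_iff)
  ultimately show ?thesis using that by blast
qed

lemma step_size:
  assumes x: "x \<in> X" and y: "y \<in> X"
  shows "h * eta\<^sup>2 * (norm (cmul (blockvec blk a x) (F x) - cmul (blockvec blk a y) (F y)))\<^sup>2
    \<le> l / 8 * (norm (x - y))\<^sup>2"
proof (rule rescaled_step_size[where F=F and a=a and blk=blk])
  obtain Fm where "\<And>x. x \<in> X \<Longrightarrow> norm (F x) \<le> Fm" using F_bounded by blast
  then show "norm (restr blk r (F y)) \<le> BF blk X F" for r
    using y by (rule norm_restr_le_BF)
  show "norm (F x - F y) \<le> L * norm (x - y)" using F_lip x y by blast
  show "\<bar>a r x - a r y\<bar> \<le> alpha * norm (x - y)" for r using a_lip x y by blast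
  show "\<bar>a (blk k) x\<bar> \<le> h" for k using A_abs_le[OF x] .
qed (use eta_pos eta_le l_pos in auto)

lemma minty_potential:
  assumes x0: "x0 \<in> X"
  obtains xstar where "rogd_potential X F (blockvec blk a) eta x0 (blockvec blk w xstar) l h xstar"
    and "0 \<le> (\<Sum>t=1..T. weighted_inner (blockvec blk w xstar)
      (cmul (blockvec blk a (iterate x0 t)) (F (iterate x0 t))) (iterate x0 t - xstar))"
proof -
  interpret rogd_run X F "blockvec blk a" eta x0
    using closed_X convex_X x0 eta_pos by unfold_locales
  obtain xstar where xstar: "xstar \<in> X" and minty_sum:
    "0 \<le> (\<Sum>t=1..T. (xt t - xstar) \<bullet> cmul (cmul (F (xt t)) (blockvec blk a (xt t))) (blockvec blk w xstar))"
    using minty xt_in_X unfolding avg_minty_def by blast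
  have "rogd_potential X F (blockvec blk a) eta x0 (blockvec blk w xstar) l h xstar"
  proof unfold_locales
    have "0 \<le> blockvec blk w xstar $ k" for k
      using W_bounds xstar l_pos by (meson less_le_trans less_imp_le)
    then show "weighted_inner (blockvec blk w xstar) (z - proj X z) (y - proj X z) \<le> 0"
      if "y \<in> X" for z y
      by (rule proj_prod_set_weighted_vi[OF X_prodZ convex_X closed_X that])
  qed (use l_pos W_bounds xstar step_size in auto)
  moreover have "0 \<le> (\<Sum>t=1..T. weighted_inner (blockvec blk w xstar) (gt t) (xt t - xstar))"
    using minty_sum by (simp add: weighted_inner_def inner_cart algebra_simps)
  ultimately show ?thesis using that by blast
qed

lemma ex_iterate_gap_le:
  assumes Gm: "\<And>x. x \<in> X \<Longrightarrow> norm (cmul (blockvec blk a x) (F x)) \<le> Gm" "0 \<le> Gm"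
    and x0: "x0 \<in> X" and T: "0 < T"
  defines "rho \<equiv> sqrt (8 * h / l * (diameter X)\<^sup>2 / real T)"
  shows "\<exists>t\<in>{1..T}. iterate x0 t \<in> X \<and> (\<forall>y\<in>X. F (iterate x0 t) \<bullet> (iterate x0 t - y)
    \<le> real CARD('r) * ((2 * diameter X / eta + Gm) * rho) / l)"
proof -
  obtain xstar where pot: "rogd_potential X F (blockvec blk a) eta x0 (blockvec blk w xstar) l h xstar"
    and minty_sum: "0 \<le> (\<Sum>t=1..T. weighted_inner (blockvec blk w xstar)
      (cmul (blockvec blk a (iterate x0 t)) (F (iterate x0 t))) (iterate x0 t - xstar))"
    using minty_potential[OF x0] by blast
  interpret rogd_potential X F "blockvec blk a" eta x0 "blockvec blk w xstar" l h xstar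
    by (rule pot)
  obtain t where t: "t < T" and res: "norm (xt (Suc t) - xh t) \<le> rho" "norm (xh (Suc t) - xt (Suc t)) \<le> rho"
    using ex_small_residuals[OF minty_sum norm_diff_le_diameter[OF x0 xstar_in_X] T]
    unfolding rho_def by blast
  have "F (xt (Suc t)) \<bullet> (xt (Suc t) - y) \<le> real CARD('r) * ((2 * diameter X / eta + Gm) * rho) / l"
    if y: "y \<in> X" for y
  proof (rule inner_le_of_rescaled_gap[OF X_prodZ xt_in_X y _ l_pos])
    show "0 \<le> (2 * diameter X / eta + Gm) * rho"
      using norm_diff_le_diameter[OF x0 x0] eta_pos Gm(2) h_nonneg l_pos unfolding rho_def by simp
    show "l \<le> a (blk k) (xt (Suc t))" for k using A_bounds xt_in_X by simp
    show "gt (Suc t) \<bullet> (xt (Suc t) - z) \<le> (2 * diameter X / eta + Gm) * rho" if "z \<in> X" for z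
      by (rule rescaled_gap_le[OF res norm_diff_le_diameter Gm(1)[OF xt_in_X] that])
  qed
  then show ?thesis using t xt_in_X by (intro bexI[of _ "Suc t"]) auto
qed

theorem rogd_gap_rate:
  "\<exists>M\<ge>0. \<forall>x0\<in>X. \<forall>T>0. \<exists>t\<in>{1..T}.
     iterate x0 t \<in> X \<and> (\<forall>y\<in>X. F (iterate x0 t) \<bullet> (iterate x0 t - y) \<le> M / sqrt (real T))"
proof -
  obtain Gm where Gm: "0 \<le> Gm" "\<And>x. x \<in> X \<Longrightarrow> norm (cmul (blockvec blk a x) (F x)) \<le> Gm"
    using rescaled_op_bounded by blast
  define M where "M = real CARD('r) / l * ((2 * diameter X / eta + Gm) * sqrt (8 * h / l * (diameter X)\<^sup>2))"
  have "0 \<le> diameter X" by (rule diameter_ge_0[OF compact_imp_bounded[OF compact_X]])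
  then have "0 \<le> M" unfolding M_def using Gm(1) eta_pos l_pos h_nonneg by simp
  moreover have "real CARD('r) * ((2 * diameter X / eta + Gm) * sqrt (8 * h / l * (diameter X)\<^sup>2 / real T)) / l
      = M / sqrt (real T)" for T
    unfolding M_def real_sqrt_divide by (simp add: times_divide_eq_right times_divide_eq_left mult_ac)
  ultimately show ?thesis
    using ex_iterate_gap_le[OF Gm(2,1)] by (intro exI[of _ M] conjI ballI allI impI) auto
qed

end

section \<open>Approximate equilibria of the game\<close>

lemma game_op_inner_upd:
  assumes "y \<in> supported_on pl i"
  shows "game_op pl u x \<bullet> (x - upd pl i x y) = grad (u i) x \<bullet> (y - restr pl i x)"
  unfolding inner_cart using assms
  by (intro sum.cong) (auto simp: game_op_def supported_on_def algebra_simps)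

lemma player_gap_le_of_gap:
  assumes X: "X = prod_set pl Xs" and Xs: "Xs i \<subseteq> supported_on pl i" and x: "x \<in> X"
    and gap: "\<forall>z\<in>X. game_op pl u x \<bullet> (x - z) \<le> e" and y: "y \<in> Xs i"
  shows "grad (u i) x \<bullet> (y - restr pl i x) \<le> e"
proof -
  have "upd pl i x y \<in> X"
    unfolding X by (rule upd_block_in_prod_set[OF x[unfolded X] Xs y])
  then have "game_op pl u x \<bullet> (x - upd pl i x y) \<le> e" using gap by blast
  then show ?thesis using Xs y by (auto simp: game_op_inner_upd)
qed

text \<open>The descent lemma along the segment from x to (y, x_{-i}), which stays in X by
  convexity of X_i.\<close>
lemma smooth_player_deviation_ge:
  assumes X: "X = prod_set pl Xs" and Xs: "Xs i \<subseteq> supported_on pl i" "convex (Xs i)"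
    and diff: "\<And>x. x \<in> X \<Longrightarrow> u i differentiable (at x)" and smooth: "player_smooth pl Xs X u L"
    and x: "x \<in> X" and y: "y \<in> Xs i"
    and gap: "grad (u i) x \<bullet> (y - restr pl i x) \<le> e" and L: "0 \<le> L"
    and dist: "norm (y - restr pl i x) \<le> \<delta>"
  shows "u i x - u i (upd pl i x y) \<ge> - e - L / 2 * \<delta>\<^sup>2"
proof -
  let ?xi = "restr pl i x"
  define v where "v = y - ?xi"
  have xi: "?xi \<in> Xs i" using x X by (simp add: prod_set_def)
  have y_supp: "y \<in> supported_on pl i" using Xs(1) y by auto
  have seg: "?xi + s *\<^sub>R v \<in> Xs i" if "0 \<le> s" "s \<le> 1" for s
    using convexD_alt[OF Xs(2) xi y that] by (simp add: v_def algebra_simps)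
  have line: "x + s *\<^sub>R v = upd pl i x (?xi + s *\<^sub>R v)" for s
    using y_supp by (auto simp: vec_eq_iff v_def supported_on_def)
  have in_X: "x + s *\<^sub>R v \<in> X" if "0 \<le> s" "s \<le> 1" for s
    unfolding line X by (rule upd_block_in_prod_set[OF x[unfolded X] Xs(1) seg[OF that]])
  have xv: "upd pl i x y = x + v"
    using upd_minus_self[OF y_supp, of x] by (simp add: v_def algebra_simps)
  have "u i (x + v) \<le> u i x + grad (u i) x \<bullet> v + L / 2 * (norm v)\<^sup>2"
  proof (rule quadratic_upper_bound_along_segment)
    fix s :: real assume s: "0 \<le> s" "s \<le> 1"
    show "u i differentiable (at (x + s *\<^sub>R v))" using diff in_X[OF s] by blast
    have "(grad (u i) (x + s *\<^sub>R v) - grad (u i) x) \<bullet> v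
        = (restr pl i (grad (u i) (x + s *\<^sub>R v)) - restr pl i (grad (u i) x)) \<bullet> v"
      unfolding inner_cart using y_supp by (intro sum.cong) (auto simp: v_def supported_on_def)
    also have "\<dots> \<le> norm (restr pl i (grad (u i) (x + s *\<^sub>R v)) - restr pl i (grad (u i) x)) * norm v"
      by (rule norm_cauchy_schwarz)
    also have "\<dots> \<le> L * norm ((?xi + s *\<^sub>R v) - ?xi) * norm v"
      using smooth[unfolded player_smooth_def, rule_format, OF x seg[OF s] xi]
      by (intro mult_right_mono) (simp_all add: line upd_restr_self)
    also have "\<dots> = L * s * (norm v)\<^sup>2"
      using s by (simp add: power2_eq_square)
    finally show "(grad (u i) (x + s *\<^sub>R v) - grad (u i) x) \<bullet> v \<le> L * s * (norm v)\<^sup>2" .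
  qed
  moreover have "L / 2 * (norm v)\<^sup>2 \<le> L / 2 * \<delta>\<^sup>2"
    using dist L by (intro mult_left_mono power_mono) (simp_all add: v_def)
  ultimately show ?thesis using gap unfolding xv v_def by linarith
qed

lemma continuous_on_upd_block: "continuous_on S (upd g c x)"
proof -
  have "upd g c x = (\<lambda>y. (x - restr g c x) + restr g c y)"
    by (auto simp: fun_eq_iff vec_eq_iff)
  moreover have "bounded_linear (restr g c)"
    by (simp add: linear_conv_bounded_linear[symmetric] linear_restr)
  then have "continuous_on S (restr g c)"
    by (rule linear_continuous_on)
  ultimately show ?thesis
    by (simp add: continuous_on_add[OF continuous_on_const])
qed

text \<open>The supremum in grad_dominant is only meaningful for a set bounded above, which holds
  because X_i is compact and u_i is continuous.\<close>
lemma dominant_player_deviation_ge: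
  assumes X: "X = prod_set pl Xs" and Xs: "Xs i \<subseteq> supported_on pl i" "compact (Xs i)" "Xs i \<noteq> {}"
    and diff: "\<And>x. x \<in> X \<Longrightarrow> u i differentiable (at x)" and dom: "grad_dominant pl Xs X u G" and G: "0 \<le> G"
    and x: "x \<in> X" and y: "y \<in> Xs i"
    and gap: "\<And>z. z \<in> Xs i \<Longrightarrow> grad (u i) x \<bullet> (z - restr pl i x) \<le> e"
  shows "u i x - u i (upd pl i x y) \<ge> - (G * e)"
proof -
  have in_X: "upd pl i x z \<in> X" if "z \<in> Xs i" for z
    unfolding X by (rule upd_block_in_prod_set[OF x[unfolded X] Xs(1) that])
  have "continuous_on (Xs i) (u i \<circ> upd pl i x)"
  proof (rule continuous_on_compose[OF continuous_on_upd_block])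
    show "continuous_on (upd pl i x ` Xs i) (u i)"
      using diff in_X differentiable_imp_continuous_within
      by (blast intro: continuous_at_imp_continuous_on)
  qed
  then have "compact ((u i \<circ> upd pl i x) ` Xs i)"
    using Xs(2) by (rule compact_continuous_image)
  then have "bdd_above ((\<lambda>z. u i (upd pl i x z)) ` Xs i)"
    by (simp add: o_def compact_imp_bounded bounded_imp_bdd_above)
  then have sup: "u i (upd pl i x y) \<le> (SUP z\<in>Xs i. u i (upd pl i x z))"
    by (rule cSUP_upper[OF y])
  have "- e \<le> (INF z\<in>Xs i. (restr pl i x - z) \<bullet> restr pl i (grad (u i) x))"
  proof (rule cINF_greatest[OF Xs(3)])
    fix z assume z: "z \<in> Xs i"
    have "(restr pl i x - z) \<bullet> restr pl i (grad (u i) x) = - (grad (u i) x \<bullet> (z - restr pl i x))"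
      unfolding inner_cart sum_negf[symmetric] using Xs(1) z
      by (intro sum.cong) (auto simp: supported_on_def algebra_simps)
    then show "- e \<le> (restr pl i x - z) \<bullet> restr pl i (grad (u i) x)" using gap[OF z] by simp
  qed
  then have "G * - e \<le> G * (INF z\<in>Xs i. (restr pl i x - z) \<bullet> restr pl i (grad (u i) x))"
    using G by (rule mult_left_mono)
  then have "- (G * e) \<le> G * (INF z\<in>Xs i. (restr pl i x - z) \<bullet> restr pl i (grad (u i) x))"
    by simp
  moreover have "G * (INF z\<in>Xs i. (restr pl i x - z) \<bullet> restr pl i (grad (u i) x))
      \<le> u i x - (SUP z\<in>Xs i. u i (upd pl i x z))"
    using dom x unfolding grad_dominant_def by blast
  ultimately show ?thesis using sup by linarith
qed

lemma rate_le_of_iterations_ge: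
  fixes M G \<epsilon> :: real
  assumes M: "0 \<le> M" and \<epsilon>: "0 < \<epsilon>" and T: "((M * max 1 G)\<^sup>2 + 1) / \<epsilon>\<^sup>2 \<le> real T"
  shows "0 < T" and "M / sqrt (real T) \<le> \<epsilon>" and "G * (M / sqrt (real T)) \<le> \<epsilon>"
proof -
  let ?c = "max 1 G"
  have "0 < \<epsilon>\<^sup>2" using \<epsilon> by simp
  with T have le: "(M * ?c)\<^sup>2 + 1 \<le> real T * \<epsilon>\<^sup>2"
    by (simp only: pos_divide_le_eq)
  show T0: "0 < T"
  proof (rule ccontr)
    assume "\<not> 0 < T"
    then show False using le zero_le_power2[of "M * ?c"] by simp
  qed
  have "(M * ?c)\<^sup>2 \<le> (\<epsilon> * sqrt (real T))\<^sup>2"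
    using le by (simp add: power_mult_distrib mult.commute)
  then have "M * ?c \<le> \<epsilon> * sqrt (real T)"
    by (rule power2_le_imp_le) (use \<epsilon> in simp)
  moreover have "0 < sqrt (real T)" using T0 by simp
  ultimately have c: "?c * (M / sqrt (real T)) \<le> \<epsilon>"
    by (simp add: pos_divide_le_eq mult.commute)
  have "0 \<le> M / sqrt (real T)" using M by simp
  then have "1 * (M / sqrt (real T)) \<le> ?c * (M / sqrt (real T))"
    and "G * (M / sqrt (real T)) \<le> ?c * (M / sqrt (real T))"
    by (intro mult_right_mono; simp)+
  with c show "M / sqrt (real T) \<le> \<epsilon>" and "G * (M / sqrt (real T)) \<le> \<epsilon>"
    by linarith+
qed

theorem corollary1:
  fixes pl :: "'k::finite \<Rightarrow> 'p"
    and blk :: "'k \<Rightarrow> 'r::finite"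
    and Xs :: "'p \<Rightarrow> (real^'k) set"
    and Zs :: "'r \<Rightarrow> (real^'k) set"
    and X :: "(real^'k) set"
    and u :: "'p \<Rightarrow> real^'k \<Rightarrow> real"
    and a w :: "'r \<Rightarrow> real^'k \<Rightarrow> real"
    and L alpha l h eta :: real
  assumes X_prod: "X = prod_set pl Xs"
    and Xs_supp: "\<forall>i. Xs i \<subseteq> supported_on pl i"
    and Xs_ne: "\<forall>i. Xs i \<noteq> {}"
    and Xs_convex: "\<forall>i. convex (Xs i)"
    and Xs_compact: "\<forall>i. compact (Xs i)"
    and X_prodZ: "X = prod_set blk Zs"
    and Zs_supp: "\<forall>r. Zs r \<subseteq> supported_on blk r"
    and u_diff: "\<forall>i. \<forall>x\<in>X. u i differentiable (at x)"
    and L_pos: "L > 0"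
    and F_lip: "\<forall>x\<in>X. \<forall>y\<in>X. norm (game_op pl u x - game_op pl u y) \<le> L * norm (x - y)"
    and a_lip: "\<forall>r. \<forall>x\<in>X. \<forall>y\<in>X. \<bar>a r x - a r y\<bar> \<le> alpha * norm (x - y)"
    and l_pos: "0 < l"
    and A_bounds: "\<forall>x\<in>X. \<forall>k. l \<le> blockvec blk a x $ k \<and> blockvec blk a x $ k \<le> h"
    and W_bounds: "\<forall>x\<in>X. \<forall>k. l \<le> blockvec blk w x $ k \<and> blockvec blk w x $ k \<le> h"
    and minty: "avg_minty X (game_op pl u) (blockvec blk a) (blockvec blk w)"
    and eta_pos: "eta > 0"
    and eta_le: "eta \<le> 1/4 * sqrt (l / (h^3 * L^2
                   + h * (BF blk X (game_op pl u))^2 * alpha^2 * real CARD('r)))"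
  shows "\<exists>C>0. \<forall>x0\<in>X. \<forall>\<epsilon>>0. \<forall>T::nat. real T \<ge> C / \<epsilon>^2 \<longrightarrow>
           (\<exists>t\<in>{1..T}.
              let x = rogd_x X (game_op pl u) (blockvec blk a) eta x0 t in
              x \<in> X \<and>
              (player_smooth pl Xs X u L \<longrightarrow>
                 (\<forall>i. \<forall>y\<in>Xs i. \<forall>\<delta>. norm (y - restr pl i x) \<le> \<delta> \<longrightarrow>
                    u i x - u i (upd pl i x y) \<ge> - \<epsilon> - L / 2 * \<delta>^2)) \<and>
              ((\<exists>G>0. grad_dominant pl Xs X u G) \<longrightarrow>
                 (\<forall>i. \<forall>y\<in>Xs i. u i x - u i (upd pl i x y) \<ge> - \<epsilon>)))"
proof -
  have X: "compact X" "convex X" "X \<noteq> {}"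
    unfolding X_prod using Xs_compact Xs_convex Xs_ne Xs_supp
    by (simp_all add: compact_prod_set convex_prod_set prod_set_nonempty)
  interpret rogd_setting X "game_op pl u" blk Zs a w L alpha l h eta
    using X_prodZ X F_lip a_lip l_pos A_bounds W_bounds minty eta_pos eta_le by unfold_locales
  obtain M where M: "0 \<le> M" and rate: "\<forall>x0\<in>X. \<forall>T>0. \<exists>t\<in>{1..T}. iterate x0 t \<in> X \<and>
      (\<forall>y\<in>X. game_op pl u (iterate x0 t) \<bullet> (iterate x0 t - y) \<le> M / sqrt (real T))"
    using rogd_gap_rate by blast
  obtain G0 where G0: "0 < G0" "(\<exists>G>0. grad_dominant pl Xs X u G) \<Longrightarrow> grad_dominant pl Xs X u G0"
    by (metis zero_less_one)
  show ?thesis (is "\<exists>C>0. \<forall>x0\<in>X. \<forall>\<epsilon>>0. \<forall>T. _ \<longrightarrow> ?approx_nash x0 \<epsilon> T")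
  proof (intro exI[of _ "(M * max 1 G0)\<^sup>2 + 1"] conjI ballI allI impI)
    fix x0 \<epsilon> and T :: nat
    assume x0: "x0 \<in> X" and \<epsilon>: "0 < \<epsilon>" and T: "((M * max 1 G0)\<^sup>2 + 1) / \<epsilon>\<^sup>2 \<le> real T"
    note T_rate = rate_le_of_iterations_ge[OF M \<epsilon> T]
    obtain t where t: "t \<in> {1..T}" and x: "iterate x0 t \<in> X"
      and gap: "\<forall>y\<in>X. game_op pl u (iterate x0 t) \<bullet> (iterate x0 t - y) \<le> M / sqrt (real T)"
      using rate[rule_format, OF x0 T_rate(1)] by blast
    note player_gap = player_gap_le_of_gap[OF X_prod Xs_supp[rule_format] x gap]
    show "?approx_nash x0 \<epsilon> T"
      unfolding Let_def
    proof (intro bexI[OF _ t] conjI impI allI ballI x)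
      fix i y \<delta> assume smooth: "player_smooth pl Xs X u L" and y: "y \<in> Xs i"
        and dist: "norm (y - restr pl i (iterate x0 t)) \<le> \<delta>"
      show "u i (iterate x0 t) - u i (upd pl i (iterate x0 t) y) \<ge> - \<epsilon> - L / 2 * \<delta>\<^sup>2"
        by (rule smooth_player_deviation_ge[OF X_prod Xs_supp[rule_format] Xs_convex[rule_format]
            u_diff[rule_format, of _ i] smooth x y order_trans[OF player_gap[OF y] T_rate(2)]
            less_imp_le[OF L_pos] dist])
    next
      fix i y assume dominant: "\<exists>G>0. grad_dominant pl Xs X u G" and y: "y \<in> Xs i"
      have "u i (iterate x0 t) - u i (upd pl i (iterate x0 t) y) \<ge> - (G0 * (M / sqrt (real T)))"
        by (rule dominant_player_deviation_ge[OF X_prod Xs_supp[rule_format] Xs_compact[rule_format]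
            Xs_ne[rule_format] u_diff[rule_format, of _ i] G0(2)[OF dominant] less_imp_le[OF G0(1)]
            x y player_gap])
      then show "u i (iterate x0 t) - u i (upd pl i (iterate x0 t) y) \<ge> - \<epsilon>"
        using T_rate(3) by linarith
    qed
  qed (simp add: add_nonneg_pos)
qed

end
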